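(* Let $\mathcal{C}$ be a fibre-symmetric coherent configuration with two fibres that admits matrices $E^{ij}_r$ satisfying (B1)–(B4). Suppose $\mathcal{C}$ has type $\begin{pmatrix}t+1&t\\&t+1\end{pmatrix}$ for some positive integer $t$, i.e. $t_{11}=t_{22}=t_{12}=t$. Then, setting $\beta$, $\gamma$ to be the two fibres, $X_i=A^{11}_i$ ($0\le i\le t$), $Y_i=A^{22}_i$ ($0\le i\le t$) and $N_h=A^{12}_h$ ($1\le h\le t$), $\mathcal{C}$ is a bipartite coherent configuration.
   Context: Coherent configuration with $f$ fibres: positive integers $x_i$, $t_{ij}$ ($1\le i,j\le f$), $\epsilon_{ij}=1-\delta_{ij}$, $x_i\times x_j$ $0/1$-matrices $A^{ij}_r$ ($\epsilon_{ij}\le r\le t_{ij}$), and $\hat A^{ij}_r$ the $f\times f$ block matrix whose only nonzero block is the $(i,j)$ block equal to $A^{ij}_r$; $\mathcal{C}=\{\hat A^{ij}_r\}$ satisfies $A^{ii}_0=I_{x_i}$, $\sum_{r=\epsilon_{ij}}^{t_{ij}}A^{ij}_r=J_{x_i,x_j}$, closure under transpose, and $\hat A^{ij}_r\hat A^{jh}_s\in\mathrm{Span}(\mathcal{C})$. Fibre-symmetric: $(A^{ii}_r)^T=A^{ii}_r$ for all $i$ and $0\le r\le t_{ii}$. The type of a two-fibre configuration is the symmetric matrix recording the number of matrices in each block: $t_{11}+1$, $t_{12}$, $t_{22}+1$. With $\tilde t_{ij}=t_{ij}-\epsilon_{ij}$, conditions on $x_i\times x_j$ matrices $E^{ij}_r$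 ($0\le r\le\tilde t_{ij}$): (B1) $E^{ij}_0=\frac{1}{\sqrt{x_ix_j}}J_{x_i,x_j}$; (B2) $\{E^{ij}_r\}_r$ is a basis of $\mathrm{Span}\{A^{ij}_r\}_r$; (B3) $(E^{ij}_r)^T=E^{ji}_r$; (B4) $E^{ij}_rE^{j'h}_s=\delta_{j,j'}\delta_{r,s}E^{ih}_r$. Bipartite coherent configuration: finite sets $\beta,\gamma$, positive integers $t_\beta,t_\gamma,t_{\beta\gamma}$, $0/1$-matrices $X_0,\dots,X_{t_\beta}$ ($|\beta|\times|\beta|$), $Y_0,\dots,Y_{t_\gamma}$ ($|\gamma|\times|\gamma|$), $N_1,\dots,N_{t_{\beta\gamma}}$ ($|\beta|\times|\gamma|$); $\mathcal{C}$ is the set of block matrices $\begin{pmatrix}X_i&0\\0&0\end{pmatrix}$, $\begin{pmatrix}0&0\\0&Y_j\end{pmatrix}$, $\begin{pmatrix}0&N_h\\0&0\end{pmatrix}$, $\begin{pmatrix}0&0\\N_h^T&0\end{pmatrix}$, satisfying: (C1) $X_0=I$, $Y_0=I$; (C2) the elements of $\mathcal{C}$ sum to $J$; (C3) closure under transpose; (C4) $M_1M_2\in\mathrm{Span}(\mathcal{C})$ for $M_1,M_2\in\mathcal{C}$; (C5) $N_iN_j^T=N_jN_i^T$ and $N_i^TN_j=N_j^TN_i$ for all $i,j$; (C6) $\{N_iN_j^T\}\cup\{I\}$ spans $\mathrm{Span}\{X_i\}$ and $\{N_i^TN_j\}\cup\{I\}$ spans $\mathrm{Span}\{Y_i\}$.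 *)

theory Defs
  imports "Jordan_Normal_Form.Matrix"
begin

definition J_mat :: "nat \<Rightarrow> nat \<Rightarrow> real mat" where
  "J_mat n m = mat n m (\<lambda>_. 1)"

definition zero_one_mat :: "real mat \<Rightarrow> bool" where
  "zero_one_mat M \<longleftrightarrow> (\<forall>a < dim_row M. \<forall>b < dim_col M. M $$ (a,b) = 0 \<or> M $$ (a,b) = 1)"

definition mat_span :: "nat \<Rightarrow> nat \<Rightarrow> real mat set \<Rightarrow> real mat set" where
  "mat_span n m S = {M \<in> carrier_mat n m. \<exists>c :: real mat \<Rightarrow> real.
      \<forall>a < n. \<forall>b < m. M $$ (a,b) = (\<Sum>K\<in>S. c K * K $$ (a,b))}"

definition lin_indep_family :: "nat \<Rightarrow> nat \<Rightarrow> 'i set \<Rightarrow> ('i \<Rightarrow> real mat) \<Rightarrow> bool" where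
  "lin_indep_family n m I F \<longleftrightarrow> finite I \<and> (\<forall>c :: 'i \<Rightarrow> real.
      (\<forall>a < n. \<forall>b < m. (\<Sum>k\<in>I. c k * F k $$ (a,b)) = 0) \<longrightarrow> (\<forall>k\<in>I. c k = 0))"

definition eps :: "nat \<Rightarrow> nat \<Rightarrow> nat" where
  "eps i j = (if i = j then 0 else 1)"

definition fib_off :: "(nat \<Rightarrow> nat) \<Rightarrow> nat \<Rightarrow> nat" where
  "fib_off x i = (\<Sum>k\<in>{1..<i}. x k)"

definition hat_mat :: "nat \<Rightarrow> (nat \<Rightarrow> nat) \<Rightarrow> nat \<Rightarrow> nat \<Rightarrow> real mat \<Rightarrow> real mat" where
  "hat_mat f x i j M = mat (fib_off x (f+1)) (fib_off x (f+1)) (\<lambda>(a,b).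
      if fib_off x i \<le> a \<and> a < fib_off x (i+1) \<and> fib_off x j \<le> b \<and> b < fib_off x (j+1)
      then M $$ (a - fib_off x i, b - fib_off x j) else 0)"

definition cc_set :: "nat \<Rightarrow> (nat \<Rightarrow> nat) \<Rightarrow> (nat \<Rightarrow> nat \<Rightarrow> nat)
     \<Rightarrow> (nat \<Rightarrow> nat \<Rightarrow> nat \<Rightarrow> real mat) \<Rightarrow> real mat set" where
  "cc_set f x t A = {hat_mat f x i j (A i j r) | i j r.
      i \<in> {1..f} \<and> j \<in> {1..f} \<and> eps i j \<le> r \<and> r \<le> t i j}"

definition coherent_config :: "nat \<Rightarrow> (nat \<Rightarrow> nat) \<Rightarrow> (nat \<Rightarrow> nat \<Rightarrow> nat)
     \<Rightarrow> (nat \<Rightarrow> nat \<Rightarrow> nat \<Rightarrow> real mat) \<Rightarrow> bool" where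
  "coherent_config f x t A \<longleftrightarrow>
     (\<forall>i\<in>{1..f}. x i > 0) \<and>
     (\<forall>i\<in>{1..f}. \<forall>j\<in>{1..f}. t i j > 0) \<and>
     (\<forall>i\<in>{1..f}. \<forall>j\<in>{1..f}. \<forall>r\<in>{eps i j..t i j}.
         A i j r \<in> carrier_mat (x i) (x j) \<and> zero_one_mat (A i j r)) \<and>
     (\<forall>i\<in>{1..f}. A i i 0 = 1\<^sub>m (x i)) \<and>
     (\<forall>i\<in>{1..f}. \<forall>j\<in>{1..f}. \<forall>a < x i. \<forall>b < x j.
         (\<Sum>r\<in>{eps i j..t i j}. A i j r $$ (a,b)) = 1) \<and>
     (\<forall>M\<in>cc_set f x t A. transpose_mat M \<in> cc_set f x t A) \<and>
     (\<forall>i\<in>{1..f}. \<forall>j\<in>{1..f}. \<forall>h\<in>{1..f}. \<forall>r\<in>{eps i j..t i j}. \<forall>s\<in>{eps j h..t j h}.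
         hat_mat f x i j (A i j r) * hat_mat f x j h (A j h s)
           \<in> mat_span (fib_off x (f+1)) (fib_off x (f+1)) (cc_set f x t A))"

definition fibre_symmetric :: "nat \<Rightarrow> (nat \<Rightarrow> nat \<Rightarrow> nat) \<Rightarrow> (nat \<Rightarrow> nat \<Rightarrow> nat \<Rightarrow> real mat) \<Rightarrow> bool" where
  "fibre_symmetric f t A \<longleftrightarrow> (\<forall>i\<in>{1..f}. \<forall>r\<in>{0..t i i}. transpose_mat (A i i r) = A i i r)"

text \<open>Conditions (B1)-(B4), with tilde t_ij = t_ij - eps_ij.  (B4) is stated for j = j';
  for j ~= j' the product of the corresponding block matrices is automatically zero.\<close>
definition admits_E :: "nat \<Rightarrow> (nat \<Rightarrow> nat) \<Rightarrow> (nat \<Rightarrow> nat \<Rightarrow> nat)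
     \<Rightarrow> (nat \<Rightarrow> nat \<Rightarrow> nat \<Rightarrow> real mat) \<Rightarrow> bool" where
  "admits_E f x t A \<longleftrightarrow> (\<exists>E :: nat \<Rightarrow> nat \<Rightarrow> nat \<Rightarrow> real mat.
     (\<forall>i\<in>{1..f}. \<forall>j\<in>{1..f}.
        E i j 0 = (1 / sqrt (real (x i * x j))) \<cdot>\<^sub>m J_mat (x i) (x j)) \<and>
     (\<forall>i\<in>{1..f}. \<forall>j\<in>{1..f}.
        (\<forall>r\<in>{0..t i j - eps i j}. E i j r \<in> carrier_mat (x i) (x j)) \<and>
        lin_indep_family (x i) (x j) {0..t i j - eps i j} (E i j) \<and>
        mat_span (x i) (x j) (E i j ` {0..t i j - eps i j})
          = mat_span (x i) (x j) (A i j ` {eps i j..t i j})) \<and>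
     (\<forall>i\<in>{1..f}. \<forall>j\<in>{1..f}. \<forall>r\<in>{0..t i j - eps i j}. transpose_mat (E i j r) = E j i r) \<and>
     (\<forall>i\<in>{1..f}. \<forall>j\<in>{1..f}. \<forall>h\<in>{1..f}.
        \<forall>r\<in>{0..t i j - eps i j}. \<forall>s\<in>{0..t j h - eps j h}.
          E i j r * E j h s = (if r = s then E i h r else 0\<^sub>m (x i) (x h))))"

text \<open>Type of a two-fibre configuration: the symmetric matrix (t11+1, t12; t12, t22+1);
  symmetry records t21 = t12.\<close>
definition has_type2 :: "(nat \<Rightarrow> nat \<Rightarrow> nat) \<Rightarrow> nat \<Rightarrow> nat \<Rightarrow> nat \<Rightarrow> bool" where
  "has_type2 t a b c \<longleftrightarrow> t 1 1 + 1 = a \<and> t 1 2 = b \<and> t 2 1 = b \<and> t 2 2 + 1 = c"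

definition bip_set :: "nat \<Rightarrow> nat \<Rightarrow> nat \<Rightarrow> nat \<Rightarrow> nat
    \<Rightarrow> (nat \<Rightarrow> real mat) \<Rightarrow> (nat \<Rightarrow> real mat) \<Rightarrow> (nat \<Rightarrow> real mat) \<Rightarrow> real mat set" where
  "bip_set nb ng tb tg tbg X Y N =
     {four_block_mat (X i) (0\<^sub>m nb ng) (0\<^sub>m ng nb) (0\<^sub>m ng ng) | i. i \<le> tb}
   \<union> {four_block_mat (0\<^sub>m nb nb) (0\<^sub>m nb ng) (0\<^sub>m ng nb) (Y j) | j. j \<le> tg}
   \<union> {four_block_mat (0\<^sub>m nb nb) (N h) (0\<^sub>m ng nb) (0\<^sub>m ng ng) | h. h \<in> {1..tbg}}
   \<union> {four_block_mat (0\<^sub>m nb nb) (0\<^sub>m nb ng) (transpose_mat (N h)) (0\<^sub>m ng ng) | h. h \<in> {1..tbg}}"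

text \<open>nb = |beta|, ng = |gamma|.\<close>
definition bipartite_cc :: "nat \<Rightarrow> nat \<Rightarrow> nat \<Rightarrow> nat \<Rightarrow> nat
    \<Rightarrow> (nat \<Rightarrow> real mat) \<Rightarrow> (nat \<Rightarrow> real mat) \<Rightarrow> (nat \<Rightarrow> real mat) \<Rightarrow> bool" where
  "bipartite_cc nb ng tb tg tbg X Y N \<longleftrightarrow>
     (let C = bip_set nb ng tb tg tbg X Y N in
     tb > 0 \<and> tg > 0 \<and> tbg > 0 \<and>
     (\<forall>i \<le> tb. X i \<in> carrier_mat nb nb \<and> zero_one_mat (X i)) \<and>
     (\<forall>j \<le> tg. Y j \<in> carrier_mat ng ng \<and> zero_one_mat (Y j)) \<and>
     (\<forall>h\<in>{1..tbg}. N h \<in> carrier_mat nb ng \<and> zero_one_mat (N h)) \<and>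
     \<comment> \<open>(C1)\<close>
     X 0 = 1\<^sub>m nb \<and> Y 0 = 1\<^sub>m ng \<and>
     \<comment> \<open>(C2)\<close>
     (\<forall>a < nb + ng. \<forall>b < nb + ng. (\<Sum>M\<in>C. M $$ (a,b)) = 1) \<and>
     \<comment> \<open>(C3)\<close>
     (\<forall>M\<in>C. transpose_mat M \<in> C) \<and>
     \<comment> \<open>(C4)\<close>
     (\<forall>M1\<in>C. \<forall>M2\<in>C. M1 * M2 \<in> mat_span (nb + ng) (nb + ng) C) \<and>
     \<comment> \<open>(C5)\<close>
     (\<forall>i\<in>{1..tbg}. \<forall>j\<in>{1..tbg}.
        N i * transpose_mat (N j) = N j * transpose_mat (N i) \<and>
        transpose_mat (N i) * N j = transpose_mat (N j) * N i) \<and>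
     \<comment> \<open>(C6)\<close>
     mat_span nb nb ({N i * transpose_mat (N j) | i j. i \<in> {1..tbg} \<and> j \<in> {1..tbg}} \<union> {1\<^sub>m nb})
       = mat_span nb nb (X ` {0..tb}) \<and>
     mat_span ng ng ({transpose_mat (N i) * N j | i j. i \<in> {1..tbg} \<and> j \<in> {1..tbg}} \<union> {1\<^sub>m ng})
       = mat_span ng ng (Y ` {0..tg}))"

end

(* Put F_r = E^12_r (r < t) and G_r = E^11_r (r <= t). By (B3) and (B4), F_r F_s^T = [r = s] G_r and the
   G_r are orthogonal idempotents; as they are nonzero and the identity X_0 lies in their span, they sum
   to I. Expanding N_h = sum_r c_hr F_r gives N_i N_j^T = sum_r c_ir c_jr G_r, which is symmetric in i and j
   (C5). Conversely every F_r is a combination of the N_h, so G_r = F_r F_r^T for r < t and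
   G_t = I - sum_(r<t) G_r lie in the span of I and the products N_i N_j^T, which is therefore
   Span{G_r} = Span{X_r} (C6). Exchanging the fibres gives the conditions on the Y's.
   The other axioms rest on a dimension count: each block family A^ij spans the same space as the
   linearly independent family E^ij of the same size, so the A^ij_r are linearly independent, in particular
   nonzero and distinct. Hence the block matrices of the configuration are pairwise distinct, the entry
   sums (C2) can be computed blockwise, and closure under transposition identifies the (2,1) block with
   the transposes of the (1,2) block. *)
theory Submission
  imports Defs "HOL-Library.Function_Algebras"
begin

lemma mat_spanI:
  assumes "M \<in> carrier_mat n m"
    and "\<forall>a<n. \<forall>b<m. M $$ (a,b) = (\<Sum>K\<in>S. c K * K $$ (a,b))"
  shows "M \<in> mat_span n m S"
  using assms unfolding mat_span_def by blast

lemma mat_spanE: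
  assumes "M \<in> mat_span n m S"
  obtains c where "M \<in> carrier_mat n m"
    and "\<forall>a<n. \<forall>b<m. M $$ (a,b) = (\<Sum>K\<in>S. c K * K $$ (a,b))"
  using assms unfolding mat_span_def by blast

lemma mat_span_zero: "0\<^sub>m n m \<in> mat_span n m S"
  by (rule mat_spanI[where c = "\<lambda>_. 0"]) auto

lemma mat_span_superset:
  assumes "finite S" "K \<in> S" "K \<in> carrier_mat n m"
  shows "K \<in> mat_span n m S"
proof (rule mat_spanI[OF assms(3), where c = "\<lambda>L. if L = K then 1 else 0"], intro allI impI)
  fix a b
  have "(\<Sum>L\<in>S. (if L = K then 1 else 0) * L $$ (a,b)) = (\<Sum>L\<in>S. if L = K then K $$ (a,b) else 0)"
    by (rule sum.cong) auto
  then show "K $$ (a,b) = (\<Sum>L\<in>S. (if L = K then 1 else 0) * L $$ (a,b))"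
    using assms by (simp add: sum.delta')
qed

lemma mat_span_lincomb:
  assumes P: "\<And>i. i \<in> I \<Longrightarrow> P i \<in> mat_span n m T"
    and M: "M \<in> carrier_mat n m"
    and d: "\<And>a b. a < n \<Longrightarrow> b < m \<Longrightarrow> M $$ (a,b) = (\<Sum>i\<in>I. d i * P i $$ (a,b))"
  shows "M \<in> mat_span n m T"
proof -
  have "\<forall>i\<in>I. \<exists>c. \<forall>a<n. \<forall>b<m. P i $$ (a,b) = (\<Sum>K\<in>T. c K * K $$ (a,b))"
  proof
    fix i assume "i \<in> I"
    from P[OF this] obtain c
      where "P i \<in> carrier_mat n m" "\<forall>a<n. \<forall>b<m. P i $$ (a,b) = (\<Sum>K\<in>T. c K * K $$ (a,b))"
      by (rule mat_spanE)
    then show "\<exists>c. \<forall>a<n. \<forall>b<m. P i $$ (a,b) = (\<Sum>K\<in>T. c K * K $$ (a,b))" by blast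
  qed
  then obtain c where c: "\<forall>i\<in>I. \<forall>a<n. \<forall>b<m. P i $$ (a,b) = (\<Sum>K\<in>T. c i K * K $$ (a,b))"
    by (rule bchoice[THEN exE])
  show ?thesis
  proof (rule mat_spanI[OF M, where c = "\<lambda>K. \<Sum>i\<in>I. d i * c i K"], intro allI impI)
    fix a b assume ab: "a < n" "b < m"
    have "M $$ (a,b) = (\<Sum>i\<in>I. \<Sum>K\<in>T. d i * c i K * K $$ (a,b))"
      using ab c by (simp add: d sum_distrib_left mult.assoc)
    also have "\<dots> = (\<Sum>K\<in>T. (\<Sum>i\<in>I. d i * c i K) * K $$ (a,b))"
      by (subst sum.swap) (simp add: sum_distrib_right)
    finally show "M $$ (a,b) = (\<Sum>K\<in>T. (\<Sum>i\<in>I. d i * c i K) * K $$ (a,b))" .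
  qed
qed

lemma mat_span_subset:
  assumes "S \<subseteq> mat_span n m T"
  shows "mat_span n m S \<subseteq> mat_span n m T"
proof
  fix M assume "M \<in> mat_span n m S"
  then obtain c where M: "M \<in> carrier_mat n m"
    and c: "\<forall>a<n. \<forall>b<m. M $$ (a,b) = (\<Sum>K\<in>S. c K * K $$ (a,b))"
    by (rule mat_spanE)
  show "M \<in> mat_span n m T"
    by (rule mat_span_lincomb[where I = S and P = id and d = c]) (use assms M c in auto)
qed

lemma mat_span_imageI:
  assumes "finite I" "M \<in> carrier_mat n m"
    and "\<forall>a<n. \<forall>b<m. M $$ (a,b) = (\<Sum>i\<in>I. d i * F i $$ (a,b))"
  shows "M \<in> mat_span n m (F ` I)"
proof (rule mat_spanI[OF assms(2), where c = "\<lambda>K. \<Sum>i\<in>{i\<in>I. F i = K}. d i"], intro allI impI)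
  fix a b assume "a < n" "b < m"
  have "(\<Sum>K\<in>F ` I. (\<Sum>i\<in>{i\<in>I. F i = K}. d i) * K $$ (a,b))
      = (\<Sum>K\<in>F ` I. \<Sum>i\<in>{i\<in>I. F i = K}. d i * F i $$ (a,b))"
    by (rule sum.cong[OF refl]) (auto simp: sum_distrib_right)
  also have "\<dots> = (\<Sum>i\<in>I. d i * F i $$ (a,b))"
    using assms(1) by (rule sum.image_gen[symmetric])
  finally show "M $$ (a,b) = (\<Sum>K\<in>F ` I. (\<Sum>i\<in>{i\<in>I. F i = K}. d i) * K $$ (a,b))"
    using assms(3) \<open>a < n\<close> \<open>b < m\<close> by simp
qed

lemma mat_span_imageE:
  assumes I: "finite I" and "M \<in> mat_span n m (F ` I)"
  obtains d where "M \<in> carrier_mat n m" "\<forall>a<n. \<forall>b<m. M $$ (a,b) = (\<Sum>i\<in>I. d i * F i $$ (a,b))"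
proof -
  obtain c where M: "M \<in> carrier_mat n m"
    and c: "\<forall>a<n. \<forall>b<m. M $$ (a,b) = (\<Sum>K\<in>F ` I. c K * K $$ (a,b))"
    using assms(2) by (rule mat_spanE)
  \<comment> \<open>a matrix may equal F i for several i; its coefficient goes to one chosen index\<close>
  define rep where "rep K = (SOME i. i \<in> I \<and> F i = K)" for K
  define d where "d i = (if i = rep (F i) then c (F i) else 0)" for i
  have "M $$ (a,b) = (\<Sum>i\<in>I. d i * F i $$ (a,b))" if ab: "a < n" "b < m" for a b
  proof -
    have "(\<Sum>i\<in>I. d i * F i $$ (a,b)) = (\<Sum>K\<in>F ` I. \<Sum>i\<in>{i\<in>I. F i = K}. d i * F i $$ (a,b))"
      using I by (rule sum.image_gen)
    also have "\<dots> = (\<Sum>K\<in>F ` I. c K * K $$ (a,b))"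
    proof (rule sum.cong[OF refl])
      fix K assume "K \<in> F ` I"
      then obtain i0 where "i0 \<in> I" "F i0 = K" by blast
      then have rep: "rep K \<in> I \<and> F (rep K) = K"
        unfolding rep_def using someI[of "\<lambda>i. i \<in> I \<and> F i = K" i0] by simp
      have "(\<Sum>i\<in>{i\<in>I. F i = K}. d i * F i $$ (a,b))
          = (\<Sum>i\<in>{i\<in>I. F i = K}. if i = rep K then c K * K $$ (a,b) else 0)"
        by (rule sum.cong) (auto simp: d_def)
      also have "\<dots> = c K * K $$ (a,b)"
        using rep I by (simp add: sum.delta')
      finally show "(\<Sum>i\<in>{i\<in>I. F i = K}. d i * F i $$ (a,b)) = c K * K $$ (a,b)" .
    qed
    finally show ?thesis using c ab by simp
  qed
  with M show thesis by (intro that[of d]) auto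
qed

lemma index_mult_mat_sum:
  assumes "A \<in> carrier_mat n m" "B \<in> carrier_mat m l" "a < n" "b < l"
  shows "(A * B) $$ (a,b) = (\<Sum>k<m. A $$ (a,k) * B $$ (k,b))"
  using assms by (simp add: scalar_prod_def lessThan_atLeast0)

lemma mult_lincomb_left:
  fixes M Q :: "real mat" and P :: "'i \<Rightarrow> real mat"
  assumes M: "M \<in> carrier_mat n m" and P: "\<And>r. r \<in> R \<Longrightarrow> P r \<in> carrier_mat n m"
    and Q: "Q \<in> carrier_mat m l"
    and c: "\<And>a k. a < n \<Longrightarrow> k < m \<Longrightarrow> M $$ (a,k) = (\<Sum>r\<in>R. c r * P r $$ (a,k))"
    and ab: "a < n" "b < l"
  shows "(M * Q) $$ (a,b) = (\<Sum>r\<in>R. c r * (P r * Q) $$ (a,b))"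
proof -
  have "(M * Q) $$ (a,b) = (\<Sum>k<m. \<Sum>r\<in>R. c r * P r $$ (a,k) * Q $$ (k,b))"
    using ab by (simp add: index_mult_mat_sum[OF M Q] c sum_distrib_right)
  also have "\<dots> = (\<Sum>r\<in>R. c r * (P r * Q) $$ (a,b))"
    using ab by (subst sum.swap) (simp add: index_mult_mat_sum[OF P Q] sum_distrib_left mult.assoc)
  finally show ?thesis .
qed

lemma mult_lincomb_right:
  fixes M Q :: "real mat" and P :: "'i \<Rightarrow> real mat"
  assumes M: "M \<in> carrier_mat n m" and P: "\<And>r. r \<in> R \<Longrightarrow> P r \<in> carrier_mat m l"
    and Q: "Q \<in> carrier_mat m l"
    and c: "\<And>k b. k < m \<Longrightarrow> b < l \<Longrightarrow> Q $$ (k,b) = (\<Sum>r\<in>R. c r * P r $$ (k,b))"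
    and ab: "a < n" "b < l"
  shows "(M * Q) $$ (a,b) = (\<Sum>r\<in>R. c r * (M * P r) $$ (a,b))"
proof -
  have "(M * Q) $$ (a,b) = (\<Sum>k<m. \<Sum>r\<in>R. c r * M $$ (a,k) * P r $$ (k,b))"
    using ab by (simp add: index_mult_mat_sum[OF M Q] c sum_distrib_left mult_ac)
  also have "\<dots> = (\<Sum>r\<in>R. c r * (M * P r) $$ (a,b))"
    using ab by (subst sum.swap) (simp add: index_mult_mat_sum[OF M P] sum_distrib_left mult.assoc)
  finally show ?thesis .
qed

section \<open>A dimension count\<close>

(* An n \<times> m matrix is identified with its entry function in the real vector space nat \<times> nat \<Rightarrow> real,
   where mat_span and lin_indep_family become span and independence and the exchange lemma applies. *)
interpretation entrywise: vector_space "\<lambda>(c::real) (f :: nat \<times> nat \<Rightarrow> real) p. c * f p"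
  by unfold_locales (auto simp: fun_eq_iff algebra_simps)

definition entries :: "nat \<Rightarrow> nat \<Rightarrow> real mat \<Rightarrow> nat \<times> nat \<Rightarrow> real" where
  "entries n m M = (\<lambda>(a,b). if a < n \<and> b < m then M $$ (a,b) else 0)"

lemma sum_fun_apply: "(\<Sum>K\<in>S. f K) p = (\<Sum>K\<in>S. f K p)"
  by (induction S rule: infinite_finite_induct) auto

lemma entries_eq_zero_iff: "entries n m M = 0 \<longleftrightarrow> (\<forall>a<n. \<forall>b<m. M $$ (a,b) = 0)"
  by (auto simp: entries_def fun_eq_iff)

lemma entries_lincomb_eq_zero_iff:
  "(\<Sum>i\<in>I. (\<lambda>p. c i * entries n m (F i) p)) = 0 \<longleftrightarrow>
     (\<forall>a<n. \<forall>b<m. (\<Sum>i\<in>I. c i * F i $$ (a,b)) = 0)"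
proof -
  have "(\<Sum>i\<in>I. (\<lambda>p. c i * entries n m (F i) p))
      = (\<lambda>(a,b). if a < n \<and> b < m then \<Sum>i\<in>I. c i * F i $$ (a,b) else 0)"
    by (auto simp: fun_eq_iff sum_fun_apply entries_def)
  then show ?thesis by (force simp: fun_eq_iff)
qed

lemma entries_mem_span:
  assumes "finite S" "M \<in> mat_span n m S"
  shows "entries n m M \<in> entrywise.span (entries n m ` S)"
proof -
  from assms(2) obtain c where "\<forall>a<n. \<forall>b<m. M $$ (a,b) = (\<Sum>K\<in>S. c K * K $$ (a,b))"
    by (rule mat_spanE)
  then have "entries n m M = (\<Sum>K\<in>S. (\<lambda>p. c K * entries n m K p))"
    by (auto simp: fun_eq_iff sum_fun_apply entries_def)
  also have "\<dots> \<in> entrywise.span (entries n m ` S)"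
    by (intro entrywise.span_sum entrywise.span_scale entrywise.span_base) auto
  finally show ?thesis .
qed

lemma lin_indep_family_imp_independent:
  assumes ind: "lin_indep_family n m I F"
  shows "inj_on (entries n m \<circ> F) I" "entrywise.independent ((entries n m \<circ> F) ` I)"
proof -
  have I: "finite I" using ind by (simp add: lin_indep_family_def)
  have zero: "\<forall>i\<in>I. c i = 0" if "(\<Sum>i\<in>I. (\<lambda>p. c i * entries n m (F i) p)) = 0" for c
    using ind that unfolding lin_indep_family_def entries_lincomb_eq_zero_iff by blast
  show inj: "inj_on (entries n m \<circ> F) I"
  proof (rule inj_onI, rule ccontr)
    fix i j assume ij: "i \<in> I" "j \<in> I" "(entries n m \<circ> F) i = (entries n m \<circ> F) j" "i \<noteq> j"
    define c where "c k = (if k = i then 1 else if k = j then -1 else 0 :: real)" for k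
    have "(\<Sum>k\<in>I. c k * entries n m (F k) p) = entries n m (F i) p - entries n m (F j) p" for p
    proof -
      have "(\<Sum>k\<in>I. c k * entries n m (F k) p)
          = (\<Sum>k\<in>I. (if k = i then entries n m (F i) p else 0) + (if k = j then - entries n m (F j) p else 0))"
        by (rule sum.cong) (auto simp: c_def ij(4))
      also have "\<dots> = entries n m (F i) p - entries n m (F j) p"
        using ij I by (simp add: sum.distrib)
      finally show ?thesis .
    qed
    then have "(\<Sum>k\<in>I. (\<lambda>p. c k * entries n m (F k) p)) = 0"
      using ij(3) by (simp add: fun_eq_iff sum_fun_apply)
    then have "c i = 0" using zero ij(1) by blast
    then show False by (simp add: c_def)
  qed
  show "entrywise.independent ((entries n m \<circ> F) ` I)"
  proof
    assume "entrywise.dependent ((entries n m \<circ> F) ` I)"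
    then obtain u where u: "\<exists>v\<in>(entries n m \<circ> F) ` I. u v \<noteq> 0"
      "(\<Sum>v\<in>(entries n m \<circ> F) ` I. (\<lambda>p. u v * v p)) = 0"
      using I by (auto simp: entrywise.dependent_finite)
    from u(2) have "(\<Sum>i\<in>I. (\<lambda>p. u (entries n m (F i)) * entries n m (F i) p)) = 0"
      using sum.reindex[OF inj, of "\<lambda>v p. u v * v p"] by simp
    with zero[of "\<lambda>i. u (entries n m (F i))"] u(1) show False by auto
  qed
qed

lemma lin_indep_family_if_independent:
  assumes I: "finite I" and inj: "inj_on (entries n m \<circ> F) I"
    and indep: "entrywise.independent ((entries n m \<circ> F) ` I)"
  shows "lin_indep_family n m I F"
proof -
  have "\<forall>k\<in>I. c k = 0" if c: "\<forall>a<n. \<forall>b<m. (\<Sum>k\<in>I. c k * F k $$ (a,b)) = 0" for c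
  proof
    fix k assume k: "k \<in> I"
    define u where "u v = c (inv_into I (entries n m \<circ> F) v)" for v
    have u: "u (entries n m (F i)) = c i" if "i \<in> I" for i
      using inv_into_f_f[OF inj that] by (simp add: u_def)
    have "(\<Sum>v\<in>(entries n m \<circ> F) ` I. (\<lambda>p. u v * v p))
        = (\<Sum>i\<in>I. (\<lambda>p. c i * entries n m (F i) p))"
      using sum.reindex[OF inj, of "\<lambda>v p. u v * v p"] by (simp add: u)
    also have "\<dots> = 0" using c by (simp only: entries_lincomb_eq_zero_iff)
    finally have "\<forall>v\<in>(entries n m \<circ> F) ` I. u v = 0"
      using I indep by (auto simp: entrywise.dependent_finite)
    then show "c k = 0" using k u by force
  qed
  with I show ?thesis by (simp add: lin_indep_family_def)
qed

lemma (in vector_space) independent_if_spans_independent: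
  assumes T: "finite T" and B: "independent B" "B \<subseteq> span T" and card: "card T \<le> card B"
  shows "independent T"
proof
  assume "dependent T"
  then obtain a where a: "a \<in> T" "a \<in> span (T - {a})" by (auto simp: dependent_def)
  then have "span T = span (T - {a})"
    using span_redundant[of a "T - {a}"] by (simp add: insert_absorb)
  then have "card B \<le> card (T - {a})"
    using T B independent_span_bound[of "T - {a}" B] by auto
  with card card_Diff1_less[OF T a(1)] show False by linarith
qed

lemma lin_indep_family_if_spans:
  assumes ind: "lin_indep_family n m I F" and J: "finite J" "card J \<le> card I"
    and span: "F ` I \<subseteq> mat_span n m (G ` J)"
  shows "lin_indep_family n m J G"
proof -
  let ?B = "(entries n m \<circ> F) ` I" and ?T = "(entries n m \<circ> G) ` J"
  have I: "finite I" "inj_on (entries n m \<circ> F) I" "entrywise.independent ?B"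
    using ind lin_indep_family_imp_independent[OF ind] by (simp_all add: lin_indep_family_def)
  have "?B \<subseteq> entrywise.span ?T"
    using span entries_mem_span[of "G ` J" _ n m] J by (auto simp: image_comp)
  then have "card ?B \<le> card ?T"
    using entrywise.independent_span_bound[of ?T ?B] I J by auto
  moreover have "card ?B = card I" by (rule card_image[OF I(2)])
  moreover have "card ?T \<le> card J" by (rule card_image_le[OF J(1)])
  ultimately have "card ?T = card J" using J by linarith
  then have "inj_on (entries n m \<circ> G) J" using J by (simp add: eq_card_imp_inj_on)
  moreover have "entrywise.independent ?T"
    using entrywise.independent_if_spans_independent[of ?T ?B] I \<open>?B \<subseteq> entrywise.span ?T\<close>
      \<open>card ?B \<le> card ?T\<close> \<open>card ?B = card I\<close> \<open>card ?T = card J\<close> J by auto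
  ultimately show ?thesis by (rule lin_indep_family_if_independent[OF J(1)])
qed

lemma lin_indep_family_nonzero:
  assumes "lin_indep_family n m I F" "i \<in> I"
  shows "\<exists>a<n. \<exists>b<m. F i $$ (a,b) \<noteq> 0"
proof (rule ccontr)
  assume "\<not> (\<exists>a<n. \<exists>b<m. F i $$ (a,b) \<noteq> 0)"
  then have "0 \<in> (entries n m \<circ> F) ` I"
    using assms(2) entries_eq_zero_iff[of n m "F i"] by (metis comp_apply image_eqI)
  then have "entrywise.dependent ((entries n m \<circ> F) ` I)" by (rule entrywise.dependent_zero)
  with lin_indep_family_imp_independent(2)[OF assms(1)] show False by simp
qed

lemma lin_indep_family_inj_on: "lin_indep_family n m I F \<Longrightarrow> inj_on F I"
  by (rule inj_on_imageI2[OF lin_indep_family_imp_independent(1)])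

section \<open>Orthogonal families of matrices\<close>

lemma sum_orthogonal_idempotents_eq_one:
  fixes G :: "'i \<Rightarrow> real mat"
  assumes I: "finite I" and G: "\<And>r. r \<in> I \<Longrightarrow> G r \<in> carrier_mat n n"
    and GG: "\<And>r s. r \<in> I \<Longrightarrow> s \<in> I \<Longrightarrow> G r * G s = (if r = s then G r else 0\<^sub>m n n)"
    and nonzero: "\<And>r. r \<in> I \<Longrightarrow> \<exists>a<n. \<exists>b<n. G r $$ (a,b) \<noteq> 0"
    and one: "1\<^sub>m n \<in> mat_span n n (G ` I)"
    and ab: "a < n" "b < n"
  shows "(\<Sum>r\<in>I. G r $$ (a,b)) = 1\<^sub>m n $$ (a,b)"
proof -
  obtain d where d: "\<forall>a<n. \<forall>b<n. 1\<^sub>m n $$ (a,b) = (\<Sum>r\<in>I. d r * G r $$ (a,b))"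
    using mat_span_imageE[OF I one] by blast
  have "d s = 1" if s: "s \<in> I" for s
  proof -
    have "G s $$ (a',b') = d s * G s $$ (a',b')" if a'b': "a' < n" "b' < n" for a' b'
    proof -
      have "G s $$ (a',b') = (1\<^sub>m n * G s) $$ (a',b')" by (simp add: left_mult_one_mat[OF G[OF s]])
      also have "\<dots> = (\<Sum>r\<in>I. d r * (G r * G s) $$ (a',b'))"
        by (rule mult_lincomb_left[where P = G]) (use G s d a'b' in auto)
      also have "\<dots> = (\<Sum>r\<in>I. if r = s then d s * G s $$ (a',b') else 0)"
        by (rule sum.cong) (use GG s a'b' in auto)
      also have "\<dots> = d s * G s $$ (a',b')" using s I by simp
      finally show ?thesis .
    qed
    with nonzero[OF s] show "d s = 1" by (metis mult_cancel_right2)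
  qed
  then show ?thesis using d ab by simp
qed

lemma mult_transpose_lincomb_orthogonal:
  fixes F G :: "'i \<Rightarrow> real mat"
  assumes R: "finite R" and F: "\<And>r. r \<in> R \<Longrightarrow> F r \<in> carrier_mat n m"
    and FF: "\<And>r s. r \<in> R \<Longrightarrow> s \<in> R \<Longrightarrow>
      F r * transpose_mat (F s) = (if r = s then G r else 0\<^sub>m n n)"
    and P: "P \<in> carrier_mat n m" "\<forall>a<n. \<forall>b<m. P $$ (a,b) = (\<Sum>r\<in>R. c r * F r $$ (a,b))"
    and Q: "Q \<in> carrier_mat n m" "\<forall>a<n. \<forall>b<m. Q $$ (a,b) = (\<Sum>r\<in>R. d r * F r $$ (a,b))"
    and ab: "a < n" "b < n"
  shows "(P * transpose_mat Q) $$ (a,b) = (\<Sum>r\<in>R. c r * d r * G r $$ (a,b))"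
proof -
  have "(P * transpose_mat Q) $$ (a,b) = (\<Sum>r\<in>R. c r * (F r * transpose_mat Q) $$ (a,b))"
    by (rule mult_lincomb_left[where P = F]) (use F P Q ab in auto)
  also have "\<dots> = (\<Sum>r\<in>R. c r * (\<Sum>s\<in>R. d s * (F r * transpose_mat (F s)) $$ (a,b)))"
  proof (rule sum.cong[OF refl])
    fix r assume r: "r \<in> R"
    have "(F r * transpose_mat Q) $$ (a,b) = (\<Sum>s\<in>R. d s * (F r * transpose_mat (F s)) $$ (a,b))"
      by (rule mult_lincomb_right[where P = "\<lambda>s. transpose_mat (F s)"])
        (use F r Q ab in \<open>auto simp: carrier_matD[OF F]\<close>)
    then show "c r * (F r * transpose_mat Q) $$ (a,b)
        = c r * (\<Sum>s\<in>R. d s * (F r * transpose_mat (F s)) $$ (a,b))" by simp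
  qed
  also have "\<dots> = (\<Sum>r\<in>R. c r * d r * G r $$ (a,b))"
  proof (rule sum.cong[OF refl])
    fix r assume r: "r \<in> R"
    have "(\<Sum>s\<in>R. d s * (F r * transpose_mat (F s)) $$ (a,b))
        = (\<Sum>s\<in>R. if r = s then d r * G r $$ (a,b) else 0)"
      by (rule sum.cong) (use FF r ab in auto)
    then show "c r * (\<Sum>s\<in>R. d s * (F r * transpose_mat (F s)) $$ (a,b)) = c r * d r * G r $$ (a,b)"
      using r R by simp
  qed
  finally show ?thesis .
qed

lemma mult_transpose_commute_if_orthogonal:
  fixes F G :: "'i \<Rightarrow> real mat"
  assumes R: "finite R" and F: "\<And>r. r \<in> R \<Longrightarrow> F r \<in> carrier_mat n m"
    and FF: "\<And>r s. r \<in> R \<Longrightarrow> s \<in> R \<Longrightarrow>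
      F r * transpose_mat (F s) = (if r = s then G r else 0\<^sub>m n n)"
    and P: "P \<in> mat_span n m (F ` R)" and Q: "Q \<in> mat_span n m (F ` R)"
  shows "P * transpose_mat Q = Q * transpose_mat P"
proof -
  obtain c where P': "P \<in> carrier_mat n m" "\<forall>a<n. \<forall>b<m. P $$ (a,b) = (\<Sum>r\<in>R. c r * F r $$ (a,b))"
    using mat_span_imageE[OF R P] by blast
  obtain d where Q': "Q \<in> carrier_mat n m" "\<forall>a<n. \<forall>b<m. Q $$ (a,b) = (\<Sum>r\<in>R. d r * F r $$ (a,b))"
    using mat_span_imageE[OF R Q] by blast
  show ?thesis
  proof (rule eq_matI)
    fix a b assume "a < dim_row (Q * transpose_mat P)" "b < dim_col (Q * transpose_mat P)"
    then have ab: "a < n" "b < n" using P'(1) Q'(1) by auto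
    show "(P * transpose_mat Q) $$ (a,b) = (Q * transpose_mat P) $$ (a,b)"
      using mult_transpose_lincomb_orthogonal[OF R F FF P' Q' ab]
        mult_transpose_lincomb_orthogonal[OF R F FF Q' P' ab]
      by (simp add: mult.commute mult.left_commute)
  qed (use P'(1) Q'(1) in auto)
qed

lemma mult_transpose_mem_mat_span_products:
  fixes N :: "'h \<Rightarrow> real mat"
  assumes H: "finite H" and N: "\<And>h. h \<in> H \<Longrightarrow> N h \<in> carrier_mat n m"
    and NN: "\<And>i j. i \<in> H \<Longrightarrow> j \<in> H \<Longrightarrow> N i * transpose_mat (N j) \<in> mat_span n n T"
    and P: "P \<in> mat_span n m (N ` H)"
  shows "P * transpose_mat P \<in> mat_span n n T"
proof -
  obtain e where P': "P \<in> carrier_mat n m" "\<forall>a<n. \<forall>b<m. P $$ (a,b) = (\<Sum>h\<in>H. e h * N h $$ (a,b))"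
    using mat_span_imageE[OF H P] by blast
  have NP: "N h * transpose_mat P \<in> mat_span n n T" if h: "h \<in> H" for h
  proof (rule mat_span_lincomb[where I = H and P = "\<lambda>k. N h * transpose_mat (N k)" and d = e])
    show "N h * transpose_mat P \<in> carrier_mat n n"
      using mult_carrier_mat[OF N[OF h], of "transpose_mat P" n] P'(1) by simp
    fix a b assume "a < n" "b < n"
    then show "(N h * transpose_mat P) $$ (a,b) = (\<Sum>k\<in>H. e k * (N h * transpose_mat (N k)) $$ (a,b))"
      by (intro mult_lincomb_right[where P = "\<lambda>k. transpose_mat (N k)"])
        (use N h P' in \<open>auto simp: carrier_matD[OF N]\<close>)
  qed (use NN h in auto)
  show ?thesis
  proof (rule mat_span_lincomb[where I = H and P = "\<lambda>h. N h * transpose_mat P" and d = e])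
    show "P * transpose_mat P \<in> carrier_mat n n" using P' by auto
    fix a b assume "a < n" "b < n"
    then show "(P * transpose_mat P) $$ (a,b) = (\<Sum>h\<in>H. e h * (N h * transpose_mat P) $$ (a,b))"
      by (intro mult_lincomb_left[where P = N]) (use N P' in auto)
  qed (use NP in auto)
qed

lemma mult_transpose_mem_mat_span_orthogonal:
  fixes F G :: "'i \<Rightarrow> real mat"
  assumes I: "finite I" "R \<subseteq> I" and F: "\<And>r. r \<in> R \<Longrightarrow> F r \<in> carrier_mat n m"
    and FF: "\<And>r s. r \<in> R \<Longrightarrow> s \<in> R \<Longrightarrow>
      F r * transpose_mat (F s) = (if r = s then G r else 0\<^sub>m n n)"
    and P: "P \<in> mat_span n m (F ` R)" and Q: "Q \<in> mat_span n m (F ` R)"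
  shows "P * transpose_mat Q \<in> mat_span n n (G ` I)"
proof -
  have R: "finite R" using I by (rule finite_subset[rotated])
  obtain c where P': "P \<in> carrier_mat n m" "\<forall>a<n. \<forall>b<m. P $$ (a,b) = (\<Sum>r\<in>R. c r * F r $$ (a,b))"
    using mat_span_imageE[OF R P] by blast
  obtain d where Q': "Q \<in> carrier_mat n m" "\<forall>a<n. \<forall>b<m. Q $$ (a,b) = (\<Sum>r\<in>R. d r * F r $$ (a,b))"
    using mat_span_imageE[OF R Q] by blast
  have PQ: "P * transpose_mat Q \<in> carrier_mat n n"
    using mult_carrier_mat[OF P'(1), of "transpose_mat Q" n] Q'(1) by simp
  have "(P * transpose_mat Q) $$ (a,b) = (\<Sum>r\<in>I. (if r \<in> R then c r * d r else 0) * G r $$ (a,b))"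
    if ab: "a < n" "b < n" for a b
  proof -
    have "(\<Sum>r\<in>I. (if r \<in> R then c r * d r else 0) * G r $$ (a,b)) = (\<Sum>r\<in>R. c r * d r * G r $$ (a,b))"
      by (rule sum.mono_neutral_cong_right[OF I]) auto
    then show ?thesis using mult_transpose_lincomb_orthogonal[OF R F FF P' Q' ab] by simp
  qed
  then show ?thesis
    by (intro mat_span_imageI[where d = "\<lambda>r. if r \<in> R then c r * d r else 0", OF I(1) PQ] allI impI)
qed

lemma mem_mat_span_if_sum_eq_one:
  fixes G :: "'i \<Rightarrow> real mat"
  assumes R: "finite R" "g \<notin> R" and G: "G g \<in> carrier_mat n n"
    and G_sum: "\<And>a b. a < n \<Longrightarrow> b < n \<Longrightarrow> (\<Sum>r\<in>insert g R. G r $$ (a,b)) = 1\<^sub>m n $$ (a,b)"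
    and one: "1\<^sub>m n \<in> mat_span n n S" and others: "\<And>r. r \<in> R \<Longrightarrow> G r \<in> mat_span n n S"
  shows "G g \<in> mat_span n n S"
proof (rule mat_span_lincomb[where I = "insert g R" and P = "\<lambda>r. if r = g then 1\<^sub>m n else G r"
      and d = "\<lambda>r. if r = g then 1 else -1"])
  show "(if r = g then 1\<^sub>m n else G r) \<in> mat_span n n S" if "r \<in> insert g R" for r
    using that one others by auto
  fix a b assume ab: "a < n" "b < n"
  have "G g $$ (a,b) = 1\<^sub>m n $$ (a,b) - (\<Sum>r\<in>R. G r $$ (a,b))"
    using G_sum[OF ab] R by simp
  also have "\<dots> = (\<Sum>r\<in>insert g R. (if r = g then 1 else -1) * (if r = g then 1\<^sub>m n else G r) $$ (a,b))"
  proof -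
    have "(\<Sum>r\<in>R. (if r = g then 1 else -1) * (if r = g then 1\<^sub>m n else G r) $$ (a,b))
        = (\<Sum>r\<in>R. - G r $$ (a,b))"
      by (rule sum.cong) (use R in auto)
    then show ?thesis using R by (simp add: sum_negf)
  qed
  finally show "G g $$ (a,b) = (\<Sum>r\<in>insert g R. (if r = g then 1 else -1) * (if r = g then 1\<^sub>m n else G r) $$ (a,b))" .
qed (fact G)

lemma mat_span_products_transpose_eq:
  fixes N :: "'h \<Rightarrow> real mat" and F G :: "'i \<Rightarrow> real mat"
  assumes H: "finite H" and R: "finite R" and g: "g \<notin> R"
    and N: "\<And>h. h \<in> H \<Longrightarrow> N h \<in> carrier_mat n m"
    and F: "\<And>r. r \<in> R \<Longrightarrow> F r \<in> carrier_mat n m"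
    and G: "\<And>r. r \<in> insert g R \<Longrightarrow> G r \<in> carrier_mat n n"
    and NF: "mat_span n m (F ` R) = mat_span n m (N ` H)"
    and FF: "\<And>r s. r \<in> R \<Longrightarrow> s \<in> R \<Longrightarrow>
      F r * transpose_mat (F s) = (if r = s then G r else 0\<^sub>m n n)"
    and G_sum: "\<And>a b. a < n \<Longrightarrow> b < n \<Longrightarrow> (\<Sum>r\<in>insert g R. G r $$ (a,b)) = 1\<^sub>m n $$ (a,b)"
  shows "mat_span n n ({N i * transpose_mat (N j) | i j. i \<in> H \<and> j \<in> H} \<union> {1\<^sub>m n})
       = mat_span n n (G ` insert g R)"
proof -
  define S where "S = {N i * transpose_mat (N j) | i j. i \<in> H \<and> j \<in> H} \<union> {1\<^sub>m n}"
  have "{N i * transpose_mat (N j) | i j. i \<in> H \<and> j \<in> H} = (\<lambda>(i,j). N i * transpose_mat (N j)) ` (H \<times> H)"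
    by auto
  then have S: "finite S" using H by (simp add: S_def)
  have N_span: "N h \<in> mat_span n m (F ` R)" if "h \<in> H" for h
    using NF mat_span_superset[of "N ` H" "N h" n m] H N[OF that] that by simp
  have one_G: "1\<^sub>m n \<in> mat_span n n (G ` insert g R)"
    by (rule mat_span_imageI[where d = "\<lambda>_. 1", OF finite.insertI[OF R] one_carrier_mat]) (simp add: G_sum)
  have "S \<subseteq> mat_span n n (G ` insert g R)"
    using one_G mult_transpose_mem_mat_span_orthogonal[OF finite.insertI[OF R] subset_insertI F FF N_span N_span]
    unfolding S_def by blast
  moreover have "G ` insert g R \<subseteq> mat_span n n S"
  proof -
    have NN_S: "N i * transpose_mat (N j) \<in> mat_span n n S" if "i \<in> H" "j \<in> H" for i j
      using mat_span_superset[OF S, of "N i * transpose_mat (N j)"] that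
        mult_carrier_mat[OF N[OF that(1)], of "transpose_mat (N j)" n] N[OF that(2)]
      by (auto simp: S_def)
    have G_S: "G r \<in> mat_span n n S" if "r \<in> R" for r
    proof -
      have "F r \<in> mat_span n m (N ` H)"
        using NF mat_span_superset[of "F ` R" "F r" n m] R F[OF that] that by simp
      then have "F r * transpose_mat (F r) \<in> mat_span n n S"
        by (rule mult_transpose_mem_mat_span_products[where N = N and H = H, rotated 3]) (use H N NN_S in auto)
      then show ?thesis using FF[OF that that] by simp
    qed
    moreover have "G g \<in> mat_span n n S"
      by (rule mem_mat_span_if_sum_eq_one[OF R g _ G_sum _ G_S])
        (use G mat_span_superset[OF S, of "1\<^sub>m n"] in \<open>auto simp: S_def\<close>)
    ultimately show ?thesis by auto
  qed
  ultimately show ?thesis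
    unfolding S_def[symmetric] by (intro subset_antisym mat_span_subset)
qed

section \<open>Block matrices\<close>

lemma fib_off_1 [simp]: "fib_off x (Suc 0) = 0"
  by (simp add: fib_off_def)

lemma fib_off_Suc: "0 < i \<Longrightarrow> fib_off x (Suc i) = fib_off x i + x i"
  by (simp add: fib_off_def atLeastLessThanSuc)

lemma fib_off_mono: "i \<le> j \<Longrightarrow> fib_off x i \<le> fib_off x j"
  unfolding fib_off_def by (rule sum_mono2) auto

lemma fibre_coordinate_iff:
  assumes k: "0 < k" "a < x k"
  shows "fib_off x i \<le> fib_off x k + a \<and> fib_off x k + a < fib_off x (Suc i) \<longleftrightarrow> i = k"
proof
  assume "i = k"
  then show "fib_off x i \<le> fib_off x k + a \<and> fib_off x k + a < fib_off x (Suc i)"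
    using k fib_off_Suc[where i = k and x = x] by simp
next
  assume *: "fib_off x i \<le> fib_off x k + a \<and> fib_off x k + a < fib_off x (Suc i)"
  show "i = k"
  proof (rule ccontr)
    assume "i \<noteq> k"
    then consider "Suc i \<le> k" | "Suc k \<le> i" by linarith
    then show False
    proof cases
      case 1
      with * show False using fib_off_mono[OF 1, of x] by linarith
    next
      case 2
      with * show False using fib_off_mono[OF 2, of x] fib_off_Suc[where i = k and x = x] k by linarith
    qed
  qed
qed

lemma fibre_coordinate_exists:
  "a < fib_off x (Suc f) \<Longrightarrow> \<exists>k\<in>{1..f}. \<exists>a'<x k. a = fib_off x k + a'"
proof (induction f)
  case 0
  then show ?case by simp
next
  case (Suc f)
  show ?case
  proof (cases "a < fib_off x (Suc f)")
    case True
    then obtain k a' where "k \<in> {1..f}" "a' < x k" "a = fib_off x k + a'"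
      using Suc.IH by blast
    then show ?thesis by (intro bexI[of _ k]) auto
  next
    case False
    with Suc.prems fib_off_Suc[where i = "Suc f" and x = x]
    have "a - fib_off x (Suc f) < x (Suc f)" "a = fib_off x (Suc f) + (a - fib_off x (Suc f))"
      by auto
    then show ?thesis by (intro bexI[of _ "Suc f"]) auto
  qed
qed

lemma dim_hat_mat [simp]:
  "dim_row (hat_mat f x i j M) = fib_off x (Suc f)" "dim_col (hat_mat f x i j M) = fib_off x (Suc f)"
  unfolding hat_mat_def by simp_all

lemma hat_mat_carrier: "hat_mat f x i j M \<in> carrier_mat (fib_off x (Suc f)) (fib_off x (Suc f))"
  unfolding carrier_mat_def by simp

lemma index_hat_mat:
  assumes ij: "i \<in> {1..f}" "j \<in> {1..f}" and kl: "k \<in> {1..f}" "l \<in> {1..f}"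
    and ab: "a < x k" "b < x l"
  shows "hat_mat f x i j M $$ (fib_off x k + a, fib_off x l + b) = (if i = k \<and> j = l then M $$ (a,b) else 0)"
proof -
  have "fib_off x k + a < fib_off x (Suc k)" "fib_off x l + b < fib_off x (Suc l)"
    using kl ab fib_off_Suc[where i = k and x = x] fib_off_Suc[where i = l and x = x] by auto
  moreover have "fib_off x (Suc k) \<le> fib_off x (Suc f)" "fib_off x (Suc l) \<le> fib_off x (Suc f)"
    using kl by (simp_all add: fib_off_mono)
  ultimately have rows: "fib_off x k + a < fib_off x (Suc f)" "fib_off x l + b < fib_off x (Suc f)"
    by linarith+
  have row_i: "fib_off x i \<le> fib_off x k + a \<and> fib_off x k + a < fib_off x (Suc i) \<longleftrightarrow> i = k"
    using ij kl ab by (intro fibre_coordinate_iff) auto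
  have col_j: "fib_off x j \<le> fib_off x l + b \<and> fib_off x l + b < fib_off x (Suc j) \<longleftrightarrow> j = l"
    using ij kl ab by (intro fibre_coordinate_iff) auto
  have "hat_mat f x i j M $$ (fib_off x k + a, fib_off x l + b)
      = (if (fib_off x i \<le> fib_off x k + a \<and> fib_off x k + a < fib_off x (Suc i))
          \<and> (fib_off x j \<le> fib_off x l + b \<and> fib_off x l + b < fib_off x (Suc j))
         then M $$ (fib_off x k + a - fib_off x i, fib_off x l + b - fib_off x j) else 0)"
    unfolding hat_mat_def using rows by (simp add: conj_assoc)
  also have "\<dots> = (if i = k \<and> j = l then M $$ (a,b) else 0)"
    by (simp only: row_i col_j) auto
  finally show ?thesis .
qed

lemma hat_mat_inj:
  assumes ij: "i \<in> {1..f}" "j \<in> {1..f}" and ij': "i' \<in> {1..f}" "j' \<in> {1..f}"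
    and M: "M \<in> carrier_mat (x i) (x j)" and M': "M' \<in> carrier_mat (x i') (x j')"
    and nonzero: "\<exists>a<x i. \<exists>b<x j. M $$ (a,b) \<noteq> 0"
    and eq: "hat_mat f x i j M = hat_mat f x i' j' M'"
  shows "i = i' \<and> j = j' \<and> M = M'"
proof -
  obtain a b where ab: "a < x i" "b < x j" "M $$ (a,b) \<noteq> 0" using nonzero by blast
  have "hat_mat f x i' j' M' $$ (fib_off x i + a, fib_off x j + b) \<noteq> 0"
    using index_hat_mat[OF ij ij ab(1,2), of M] ab(3) eq by simp
  then have same: "i' = i" "j' = j"
    using index_hat_mat[OF ij' ij ab(1,2), of M'] by (auto split: if_splits)
  have "M = M'"
  proof (rule eq_matI)
    fix a b assume "a < dim_row M'" "b < dim_col M'"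
    then have ab: "a < x i" "b < x j" using M' same by auto
    show "M $$ (a,b) = M' $$ (a,b)"
      using index_hat_mat[OF ij ij ab, of M] index_hat_mat[OF ij ij ab, of M'] eq same by simp
  qed (use M M' same in auto)
  with same show ?thesis by simp
qed

lemma transpose_hat_mat:
  assumes ij: "i \<in> {1..f}" "j \<in> {1..f}" and M: "M \<in> carrier_mat (x i) (x j)"
  shows "transpose_mat (hat_mat f x i j M) = hat_mat f x j i (transpose_mat M)"
proof (rule eq_matI)
  fix a b assume "a < dim_row (hat_mat f x j i (transpose_mat M))" "b < dim_col (hat_mat f x j i (transpose_mat M))"
  then have ab: "a < fib_off x (Suc f)" "b < fib_off x (Suc f)" by simp_all
  obtain k a' where k: "k \<in> {1..f}" "a' < x k" "a = fib_off x k + a'"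
    using fibre_coordinate_exists[OF ab(1)] by blast
  obtain l b' where l: "l \<in> {1..f}" "b' < x l" "b = fib_off x l + b'"
    using fibre_coordinate_exists[OF ab(2)] by blast
  have "transpose_mat (hat_mat f x i j M) $$ (a,b) = hat_mat f x i j M $$ (b,a)"
    using ab by simp
  also have "\<dots> = (if i = l \<and> j = k then M $$ (b',a') else 0)"
    using index_hat_mat[OF ij l(1) k(1) l(2) k(2)] k l by simp
  also have "\<dots> = hat_mat f x j i (transpose_mat M) $$ (a,b)"
    using index_hat_mat[OF ij(2,1) k(1) l(1) k(2) l(2)] k l M by auto
  finally show "transpose_mat (hat_mat f x i j M) $$ (a,b) = hat_mat f x j i (transpose_mat M) $$ (a,b)" .
qed simp_all

lemma hat_mat_mult_hat_mat_eq_0: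
  assumes ij: "i \<in> {1..f}" "j \<in> {1..f}" and jh: "j' \<in> {1..f}" "h \<in> {1..f}" and "j \<noteq> j'"
  shows "hat_mat f x i j M * hat_mat f x j' h M' = 0\<^sub>m (fib_off x (Suc f)) (fib_off x (Suc f))"
proof (rule eq_matI)
  fix a b assume "a < dim_row (0\<^sub>m (fib_off x (Suc f)) (fib_off x (Suc f)) :: real mat)"
    "b < dim_col (0\<^sub>m (fib_off x (Suc f)) (fib_off x (Suc f)) :: real mat)"
  then have ab: "a < fib_off x (Suc f)" "b < fib_off x (Suc f)" by simp_all
  obtain k a' where k: "k \<in> {1..f}" "a' < x k" "a = fib_off x k + a'"
    using fibre_coordinate_exists[OF ab(1)] by blast
  obtain l b' where l: "l \<in> {1..f}" "b' < x l" "b = fib_off x l + b'"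
    using fibre_coordinate_exists[OF ab(2)] by blast
  have "hat_mat f x i j M $$ (a,c) * hat_mat f x j' h M' $$ (c,b) = 0" if c: "c < fib_off x (Suc f)" for c
  proof -
    obtain q c' where q: "q \<in> {1..f}" "c' < x q" "c = fib_off x q + c'"
      using fibre_coordinate_exists[OF c] by blast
    show ?thesis
      using index_hat_mat[OF ij k(1) q(1) k(2) q(2), of M] index_hat_mat[OF jh q(1) l(1) q(2) l(2), of M']
        k(3) l(3) q(3) \<open>j \<noteq> j'\<close> by auto
  qed
  then have "(\<Sum>c<fib_off x (Suc f). hat_mat f x i j M $$ (a,c) * hat_mat f x j' h M' $$ (c,b)) = 0"
    by (intro sum.neutral) auto
  then show "(hat_mat f x i j M * hat_mat f x j' h M') $$ (a,b)
      = 0\<^sub>m (fib_off x (Suc f)) (fib_off x (Suc f)) $$ (a,b)"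
    using index_mult_mat_sum[OF hat_mat_carrier hat_mat_carrier ab] ab by simp
qed simp_all

lemma eps_same [simp]: "eps i i = 0" and eps_distinct [simp]: "i \<noteq> j \<Longrightarrow> eps i j = 1"
  by (simp_all add: eps_def)

lemma coherent_config_pos:
  "coherent_config f x t A \<Longrightarrow> i \<in> {1..f} \<Longrightarrow> j \<in> {1..f} \<Longrightarrow> 0 < t i j"
  unfolding coherent_config_def by blast

lemma coherent_config_block:
  assumes "coherent_config f x t A" "i \<in> {1..f}" "j \<in> {1..f}" "r \<in> {eps i j..t i j}"
  shows "A i j r \<in> carrier_mat (x i) (x j)" "zero_one_mat (A i j r)"
  using assms unfolding coherent_config_def by blast+

lemma coherent_config_identity:
  "coherent_config f x t A \<Longrightarrow> i \<in> {1..f} \<Longrightarrow> A i i 0 = 1\<^sub>m (x i)"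
  unfolding coherent_config_def by blast

lemma coherent_config_block_sum:
  "coherent_config f x t A \<Longrightarrow> i \<in> {1..f} \<Longrightarrow> j \<in> {1..f} \<Longrightarrow> a < x i \<Longrightarrow> b < x j \<Longrightarrow>
    (\<Sum>r\<in>{eps i j..t i j}. A i j r $$ (a,b)) = 1"
  unfolding coherent_config_def by blast

lemma coherent_config_transpose_closed:
  "coherent_config f x t A \<Longrightarrow> M \<in> cc_set f x t A \<Longrightarrow> transpose_mat M \<in> cc_set f x t A"
  unfolding coherent_config_def by blast

lemma coherent_config_mult:
  "coherent_config f x t A \<Longrightarrow> i \<in> {1..f} \<Longrightarrow> j \<in> {1..f} \<Longrightarrow> h \<in> {1..f} \<Longrightarrow>
    r \<in> {eps i j..t i j} \<Longrightarrow> s \<in> {eps j h..t j h} \<Longrightarrow>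
    hat_mat f x i j (A i j r) * hat_mat f x j h (A j h s)
      \<in> mat_span (fib_off x (f + 1)) (fib_off x (f + 1)) (cc_set f x t A)"
  unfolding coherent_config_def by blast

definition cc_indices :: "nat \<Rightarrow> (nat \<Rightarrow> nat \<Rightarrow> nat) \<Rightarrow> (nat \<times> nat \<times> nat) set" where
  "cc_indices f t = (SIGMA i:{1..f}. SIGMA j:{1..f}. {eps i j..t i j})"

lemma finite_cc_indices: "finite (cc_indices f t)"
  unfolding cc_indices_def by (intro finite_SigmaI) auto

lemma cc_set_eq_image: "cc_set f x t A = (\<lambda>(i,j,r). hat_mat f x i j (A i j r)) ` cc_indices f t"
  unfolding cc_set_def cc_indices_def by force

lemma admits_EE:
  assumes "admits_E f x t A"
  obtains E where
    "\<And>i j r. i \<in> {1..f} \<Longrightarrow> j \<in> {1..f} \<Longrightarrow> r \<in> {0..t i j - eps i j} \<Longrightarrow>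
      E i j r \<in> carrier_mat (x i) (x j)"
    "\<And>i j. i \<in> {1..f} \<Longrightarrow> j \<in> {1..f} \<Longrightarrow>
      lin_indep_family (x i) (x j) {0..t i j - eps i j} (E i j)"
    "\<And>i j. i \<in> {1..f} \<Longrightarrow> j \<in> {1..f} \<Longrightarrow>
      mat_span (x i) (x j) (E i j ` {0..t i j - eps i j}) = mat_span (x i) (x j) (A i j ` {eps i j..t i j})"
    "\<And>i j r. i \<in> {1..f} \<Longrightarrow> j \<in> {1..f} \<Longrightarrow> r \<in> {0..t i j - eps i j} \<Longrightarrow>
      transpose_mat (E i j r) = E j i r"
    "\<And>i j h r s. i \<in> {1..f} \<Longrightarrow> j \<in> {1..f} \<Longrightarrow> h \<in> {1..f} \<Longrightarrow>
      r \<in> {0..t i j - eps i j} \<Longrightarrow> s \<in> {0..t j h - eps j h} \<Longrightarrow>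
      E i j r * E j h s = (if r = s then E i h r else 0\<^sub>m (x i) (x h))"
proof -
  from assms obtain E where
    E: "\<forall>i\<in>{1..f}. \<forall>j\<in>{1..f}.
        (\<forall>r\<in>{0..t i j - eps i j}. E i j r \<in> carrier_mat (x i) (x j)) \<and>
        lin_indep_family (x i) (x j) {0..t i j - eps i j} (E i j) \<and>
        mat_span (x i) (x j) (E i j ` {0..t i j - eps i j}) = mat_span (x i) (x j) (A i j ` {eps i j..t i j})"
    and E_transpose: "\<forall>i\<in>{1..f}. \<forall>j\<in>{1..f}. \<forall>r\<in>{0..t i j - eps i j}. transpose_mat (E i j r) = E j i r"
    and E_mult: "\<forall>i\<in>{1..f}. \<forall>j\<in>{1..f}. \<forall>h\<in>{1..f}. \<forall>r\<in>{0..t i j - eps i j}. \<forall>s\<in>{0..t j h - eps j h}.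
        E i j r * E j h s = (if r = s then E i h r else 0\<^sub>m (x i) (x h))"
    unfolding admits_E_def by blast
  show thesis
    by (rule that[of E]) (use E E_transpose E_mult in blast)+
qed

lemma admits_E_lin_indep:
  assumes cc: "coherent_config f x t A" and E: "admits_E f x t A"
    and ij: "i \<in> {1..f}" "j \<in> {1..f}"
  shows "lin_indep_family (x i) (x j) {eps i j..t i j} (A i j)"
proof -
  obtain E where E_carrier: "\<And>r. r \<in> {0..t i j - eps i j} \<Longrightarrow> E i j r \<in> carrier_mat (x i) (x j)"
    and E_indep: "lin_indep_family (x i) (x j) {0..t i j - eps i j} (E i j)"
    and E_span: "mat_span (x i) (x j) (E i j ` {0..t i j - eps i j})
      = mat_span (x i) (x j) (A i j ` {eps i j..t i j})"
    using admits_EE[OF E] ij by metis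
  have "eps i j \<le> t i j"
    using coherent_config_pos[OF cc ij] by (simp add: eps_def)
  then have card: "card {eps i j..t i j} \<le> card {0..t i j - eps i j}" by simp
  have "E i j ` {0..t i j - eps i j} \<subseteq> mat_span (x i) (x j) (A i j ` {eps i j..t i j})"
    using E_span E_carrier mat_span_superset[of "E i j ` {0..t i j - eps i j}" _ "x i" "x j"] by auto
  then show ?thesis by (rule lin_indep_family_if_spans[OF E_indep finite_atLeastAtMost card])
qed

lemma admits_E_block_nonzero:
  assumes "coherent_config f x t A" "admits_E f x t A" "i \<in> {1..f}" "j \<in> {1..f}" "r \<in> {eps i j..t i j}"
  shows "\<exists>a<x i. \<exists>b<x j. A i j r $$ (a,b) \<noteq> 0"
  using lin_indep_family_nonzero[OF admits_E_lin_indep[OF assms(1-4)] assms(5)] .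

lemma inj_on_cc_indices:
  assumes cc: "coherent_config f x t A" and E: "admits_E f x t A"
  shows "inj_on (\<lambda>(i,j,r). hat_mat f x i j (A i j r)) (cc_indices f t)"
proof (rule inj_onI)
  fix p q assume p: "p \<in> cc_indices f t" and q: "q \<in> cc_indices f t"
    and eq: "(\<lambda>(i,j,r). hat_mat f x i j (A i j r)) p = (\<lambda>(i,j,r). hat_mat f x i j (A i j r)) q"
  obtain i j r i' j' r' where pq: "p = (i,j,r)" "q = (i',j',r')" by (cases p, cases q) auto
  from p q have ij: "i \<in> {1..f}" "j \<in> {1..f}" "r \<in> {eps i j..t i j}"
    and ij': "i' \<in> {1..f}" "j' \<in> {1..f}" "r' \<in> {eps i' j'..t i' j'}"
    by (auto simp: cc_indices_def pq)
  have same: "i = i' \<and> j = j' \<and> A i j r = A i' j' r'"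
    using eq unfolding pq
    by (intro hat_mat_inj[OF ij(1,2) ij'(1,2) coherent_config_block(1)[OF cc ij]
          coherent_config_block(1)[OF cc ij'] admits_E_block_nonzero[OF cc E ij]]) simp
  then have "r = r'"
    using inj_onD[OF lin_indep_family_inj_on[OF admits_E_lin_indep[OF cc E ij(1,2)]], of r r'] ij(3) ij'(3)
    by auto
  with same show "p = q" by (simp add: pq)
qed

lemma cc_set_entry_sum:
  assumes cc: "coherent_config f x t A" and E: "admits_E f x t A"
    and ab: "a < fib_off x (Suc f)" "b < fib_off x (Suc f)"
  shows "(\<Sum>M\<in>cc_set f x t A. M $$ (a,b)) = 1"
proof -
  obtain k a' where k: "k \<in> {1..f}" "a' < x k" "a = fib_off x k + a'"
    using fibre_coordinate_exists[OF ab(1)] by blast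
  obtain l b' where l: "l \<in> {1..f}" "b' < x l" "b = fib_off x l + b'"
    using fibre_coordinate_exists[OF ab(2)] by blast
  let ?g = "(\<lambda>M. M $$ (a,b)) \<circ> (\<lambda>(i,j,r). hat_mat f x i j (A i j r))"
  have "(\<Sum>M\<in>cc_set f x t A. M $$ (a,b)) = (\<Sum>p\<in>cc_indices f t. ?g p)"
    unfolding cc_set_eq_image by (rule sum.reindex[OF inj_on_cc_indices[OF cc E]])
  \<comment> \<open>only the block containing the entry contributes\<close>
  also have "\<dots> = (\<Sum>p\<in>(\<lambda>r. (k,l,r)) ` {eps k l..t k l}. ?g p)"
    by (rule sum.mono_neutral_right[OF finite_cc_indices])
      (use k l in \<open>auto simp: cc_indices_def index_hat_mat\<close>)
  also have "\<dots> = (\<Sum>r\<in>{eps k l..t k l}. A k l r $$ (a',b'))"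
    by (subst sum.reindex) (use k l in \<open>auto simp: inj_on_def index_hat_mat\<close>)
  also have "\<dots> = 1"
    using coherent_config_block_sum[OF cc k(1) l(1) k(2) l(2)] .
  finally show ?thesis .
qed

lemma transpose_block_subset:
  assumes cc: "coherent_config f x t A" and E: "admits_E f x t A"
    and ij: "i \<in> {1..f}" "j \<in> {1..f}"
  shows "transpose_mat ` A i j ` {eps i j..t i j} \<subseteq> A j i ` {eps j i..t j i}"
proof
  fix M assume "M \<in> transpose_mat ` A i j ` {eps i j..t i j}"
  then obtain r where r: "r \<in> {eps i j..t i j}" and M: "M = transpose_mat (A i j r)" by blast
  note A = coherent_config_block(1)[OF cc ij r]
  have "hat_mat f x i j (A i j r) \<in> cc_set f x t A"
    using ij r unfolding cc_set_def by auto
  then have "hat_mat f x j i M \<in> cc_set f x t A"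
    using coherent_config_transpose_closed[OF cc] transpose_hat_mat[OF ij A] M by metis
  then obtain i' j' r' where ij': "i' \<in> {1..f}" "j' \<in> {1..f}" "r' \<in> {eps i' j'..t i' j'}"
    and eq: "hat_mat f x j i M = hat_mat f x i' j' (A i' j' r')"
    unfolding cc_set_def by auto
  obtain a b where ab: "a < x i" "b < x j" "A i j r $$ (a,b) \<noteq> 0"
    using admits_E_block_nonzero[OF cc E ij r] by blast
  then have "M $$ (b,a) \<noteq> 0" using A M by simp
  with ab have "\<exists>a<x j. \<exists>b<x i. M $$ (a,b) \<noteq> 0" by blast
  then have "j = i' \<and> i = j' \<and> M = A i' j' r'"
    using M A by (intro hat_mat_inj[OF ij(2,1) ij'(1,2) _ coherent_config_block(1)[OF cc ij'] _ eq]) auto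
  then show "M \<in> A j i ` {eps j i..t j i}" using ij'(3) by auto
qed

lemma transpose_block_eq:
  assumes cc: "coherent_config f x t A" and E: "admits_E f x t A"
    and ij: "i \<in> {1..f}" "j \<in> {1..f}"
  shows "A j i ` {eps j i..t j i} = transpose_mat ` A i j ` {eps i j..t i j}"
proof
  have "transpose_mat ` transpose_mat ` A j i ` {eps j i..t j i} \<subseteq> transpose_mat ` A i j ` {eps i j..t i j}"
    using transpose_block_subset[OF cc E ij(2,1)] by (rule image_mono)
  then show "A j i ` {eps j i..t j i} \<subseteq> transpose_mat ` A i j ` {eps i j..t i j}"
    by (simp add: image_image)
qed (rule transpose_block_subset[OF cc E ij])

lemma cc_set_mult_closed:
  assumes cc: "coherent_config f x t A" and M: "M \<in> cc_set f x t A" and M': "M' \<in> cc_set f x t A"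
  shows "M * M' \<in> mat_span (fib_off x (Suc f)) (fib_off x (Suc f)) (cc_set f x t A)"
proof -
  obtain i j r where ij: "i \<in> {1..f}" "j \<in> {1..f}" "r \<in> {eps i j..t i j}" and M: "M = hat_mat f x i j (A i j r)"
    using M unfolding cc_set_def by auto
  obtain j' h s where jh: "j' \<in> {1..f}" "h \<in> {1..f}" "s \<in> {eps j' h..t j' h}" and M': "M' = hat_mat f x j' h (A j' h s)"
    using M' unfolding cc_set_def by auto
  show ?thesis
  proof (cases "j = j'")
    case True
    then show ?thesis using coherent_config_mult[OF cc ij(1,2) jh(2) ij(3)] jh(3) M M' by simp
  next
    case False
    then show ?thesis using hat_mat_mult_hat_mat_eq_0[OF ij(1,2) jh(1,2) False] M M' mat_span_zero by simp
  qed
qed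

lemma admits_E_orthogonal_blocks:
  assumes cc: "coherent_config f x t A" and E: "admits_E f x t A"
    and ij: "i \<in> {1..f}" "j \<in> {1..f}" "i \<noteq> j" and T: "t i j = T" "t j i = T" "t i i = T"
  obtains F G where
    "\<And>r. r \<in> {0..T - 1} \<Longrightarrow> F r \<in> carrier_mat (x i) (x j)"
    "\<And>r. r \<in> {0..T} \<Longrightarrow> G r \<in> carrier_mat (x i) (x i)"
    "\<And>r s. r \<in> {0..T - 1} \<Longrightarrow> s \<in> {0..T - 1} \<Longrightarrow>
      F r * transpose_mat (F s) = (if r = s then G r else 0\<^sub>m (x i) (x i))"
    "\<And>r s. r \<in> {0..T} \<Longrightarrow> s \<in> {0..T} \<Longrightarrow> G r * G s = (if r = s then G r else 0\<^sub>m (x i) (x i))"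
    "lin_indep_family (x i) (x i) {0..T} G"
    "mat_span (x i) (x j) (F ` {0..T - 1}) = mat_span (x i) (x j) (A i j ` {1..T})"
    "mat_span (x i) (x i) (G ` {0..T}) = mat_span (x i) (x i) (A i i ` {0..T})"
proof -
  from admits_EE[OF E] obtain E where
    E_carrier: "\<And>i j r. i \<in> {1..f} \<Longrightarrow> j \<in> {1..f} \<Longrightarrow> r \<in> {0..t i j - eps i j} \<Longrightarrow>
      E i j r \<in> carrier_mat (x i) (x j)"
    and E_indep: "\<And>i j. i \<in> {1..f} \<Longrightarrow> j \<in> {1..f} \<Longrightarrow>
      lin_indep_family (x i) (x j) {0..t i j - eps i j} (E i j)"
    and E_span: "\<And>i j. i \<in> {1..f} \<Longrightarrow> j \<in> {1..f} \<Longrightarrow>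
      mat_span (x i) (x j) (E i j ` {0..t i j - eps i j}) = mat_span (x i) (x j) (A i j ` {eps i j..t i j})"
    and E_transpose: "\<And>i j r. i \<in> {1..f} \<Longrightarrow> j \<in> {1..f} \<Longrightarrow> r \<in> {0..t i j - eps i j} \<Longrightarrow>
      transpose_mat (E i j r) = E j i r"
    and E_mult: "\<And>i j h r s. i \<in> {1..f} \<Longrightarrow> j \<in> {1..f} \<Longrightarrow> h \<in> {1..f} \<Longrightarrow>
      r \<in> {0..t i j - eps i j} \<Longrightarrow> s \<in> {0..t j h - eps j h} \<Longrightarrow>
      E i j r * E j h s = (if r = s then E i h r else 0\<^sub>m (x i) (x h))"
    by blast
  have ji: "j \<noteq> i" using ij(3) by simp
  show thesis
    by (rule that[of "E i j" "E i i"])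
      (use E_carrier[OF ij(1,2)] E_carrier[OF ij(1,1)] E_transpose[OF ij(1,2)] E_mult[OF ij(1,2,1)]
        E_mult[OF ij(1,1,1)] E_indep[OF ij(1,1)] E_span[OF ij(1,2)] E_span[OF ij(1,1)] ij(3) ji T
        in simp)+
qed

lemma admits_E_products_transpose:
  assumes cc: "coherent_config f x t A" and E: "admits_E f x t A"
    and ij: "i \<in> {1..f}" "j \<in> {1..f}" "i \<noteq> j" and T: "t i j = T" "t j i = T" "t i i = T"
    and N: "\<forall>h\<in>{1..T}. N h \<in> carrier_mat (x i) (x j)"
    and NA: "mat_span (x i) (x j) (N ` {1..T}) = mat_span (x i) (x j) (A i j ` {1..T})"
  shows "(\<forall>h\<in>{1..T}. \<forall>h'\<in>{1..T}. N h * transpose_mat (N h') = N h' * transpose_mat (N h)) \<and>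
    mat_span (x i) (x i) ({N h * transpose_mat (N h') | h h'. h \<in> {1..T} \<and> h' \<in> {1..T}} \<union> {1\<^sub>m (x i)})
      = mat_span (x i) (x i) (A i i ` {0..T})"
proof -
  obtain F G where F: "\<And>r. r \<in> {0..T - 1} \<Longrightarrow> F r \<in> carrier_mat (x i) (x j)"
    and G: "\<And>r. r \<in> {0..T} \<Longrightarrow> G r \<in> carrier_mat (x i) (x i)"
    and FF: "\<And>r s. r \<in> {0..T - 1} \<Longrightarrow> s \<in> {0..T - 1} \<Longrightarrow>
      F r * transpose_mat (F s) = (if r = s then G r else 0\<^sub>m (x i) (x i))"
    and GG: "\<And>r s. r \<in> {0..T} \<Longrightarrow> s \<in> {0..T} \<Longrightarrow> G r * G s = (if r = s then G r else 0\<^sub>m (x i) (x i))"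
    and G_indep: "lin_indep_family (x i) (x i) {0..T} G"
    and F_span: "mat_span (x i) (x j) (F ` {0..T - 1}) = mat_span (x i) (x j) (A i j ` {1..T})"
    and G_span: "mat_span (x i) (x i) (G ` {0..T}) = mat_span (x i) (x i) (A i i ` {0..T})"
    using admits_E_orthogonal_blocks[OF cc E ij T] by blast
  have "0 < T" using coherent_config_pos[OF cc ij(1,2)] T(1) by simp
  then have G_indices: "{0..T} = insert T {0..T - 1}" "T \<notin> {0..T - 1}" by auto
  have "1\<^sub>m (x i) \<in> mat_span (x i) (x i) (A i i ` {0..T})"
    using coherent_config_identity[OF cc ij(1)]
    by (intro mat_span_superset[of _ _ "x i" "x i"]) (auto intro: image_eqI[where x = 0])
  then have one: "1\<^sub>m (x i) \<in> mat_span (x i) (x i) (G ` {0..T})"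
    using G_span by simp
  have G_sum: "(\<Sum>r\<in>insert T {0..T - 1}. G r $$ (a,b)) = 1\<^sub>m (x i) $$ (a,b)"
    if "a < x i" "b < x i" for a b
    using sum_orthogonal_idempotents_eq_one[OF finite_atLeastAtMost G GG
        lin_indep_family_nonzero[OF G_indep] one that] G_indices by simp
  have F_N: "mat_span (x i) (x j) (F ` {0..T - 1}) = mat_span (x i) (x j) (N ` {1..T})"
    using F_span NA by simp
  have N_span: "N h \<in> mat_span (x i) (x j) (F ` {0..T - 1})" if "h \<in> {1..T}" for h
    using F_N mat_span_superset[of "N ` {1..T}" "N h" "x i" "x j"] N that by simp
  have "N h * transpose_mat (N h') = N h' * transpose_mat (N h)" if "h \<in> {1..T}" "h' \<in> {1..T}" for h h'
    by (rule mult_transpose_commute_if_orthogonal[OF finite_atLeastAtMost F FF N_span[OF that(1)] N_span[OF that(2)]])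
  moreover have "mat_span (x i) (x i)
      ({N h * transpose_mat (N h') | h h'. h \<in> {1..T} \<and> h' \<in> {1..T}} \<union> {1\<^sub>m (x i)})
      = mat_span (x i) (x i) (G ` insert T {0..T - 1})"
    by (rule mat_span_products_transpose_eq[OF finite_atLeastAtMost _ G_indices(2) _ F _ F_N FF G_sum])
      (use G G_indices N in auto)
  ultimately show ?thesis using G_span G_indices by simp
qed

section \<open>Two fibres\<close>

lemma fib_off_two_fibres:
  "fib_off x 1 = 0" "fib_off x 2 = x 1" "fib_off x (1 + 1) = x 1" "fib_off x (2 + 1) = x 1 + x 2"
proof -
  have "{1..<1::nat} = {}" "{1..<2::nat} = {1}" "{1..<3::nat} = {1,2}" "(1::nat) + 1 = 2" "(2::nat) + 1 = 3"
    by auto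
  then show "fib_off x 1 = 0" "fib_off x 2 = x 1" "fib_off x (1 + 1) = x 1" "fib_off x (2 + 1) = x 1 + x 2"
    unfolding fib_off_def by simp_all
qed

lemma hat_mat_two_fibres:
  "M \<in> carrier_mat (x 1) (x 1) \<Longrightarrow>
    hat_mat 2 x 1 1 M = four_block_mat M (0\<^sub>m (x 1) (x 2)) (0\<^sub>m (x 2) (x 1)) (0\<^sub>m (x 2) (x 2))"
  "M \<in> carrier_mat (x 2) (x 2) \<Longrightarrow>
    hat_mat 2 x 2 2 M = four_block_mat (0\<^sub>m (x 1) (x 1)) (0\<^sub>m (x 1) (x 2)) (0\<^sub>m (x 2) (x 1)) M"
  "M \<in> carrier_mat (x 1) (x 2) \<Longrightarrow>
    hat_mat 2 x 1 2 M = four_block_mat (0\<^sub>m (x 1) (x 1)) M (0\<^sub>m (x 2) (x 1)) (0\<^sub>m (x 2) (x 2))"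
  "M \<in> carrier_mat (x 2) (x 1) \<Longrightarrow>
    hat_mat 2 x 2 1 M = four_block_mat (0\<^sub>m (x 1) (x 1)) (0\<^sub>m (x 1) (x 2)) M (0\<^sub>m (x 2) (x 2))"
  unfolding hat_mat_def fib_off_two_fibres by (rule eq_matI; auto)+

lemma cc_set_two_fibres:
  "cc_set 2 x t A = (\<lambda>r. hat_mat 2 x 1 1 (A 1 1 r)) ` {0..t 1 1} \<union> (\<lambda>r. hat_mat 2 x 2 2 (A 2 2 r)) ` {0..t 2 2}
     \<union> (\<lambda>r. hat_mat 2 x 1 2 (A 1 2 r)) ` {1..t 1 2} \<union> (\<lambda>r. hat_mat 2 x 2 1 (A 2 1 r)) ` {1..t 2 1}"
proof -
  have two: "{1..2::nat} = {1,2}" by auto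
  have "cc_set 2 x t A = (\<Union>i\<in>{1,2}. \<Union>j\<in>{1,2}. (\<lambda>r. hat_mat 2 x i j (A i j r)) ` {eps i j..t i j})"
    unfolding cc_set_def two by fastforce
  then show ?thesis by (simp add: Un_ac)
qed

lemma cc_set_two_fibres_four_block:
  assumes cc: "coherent_config 2 x t A" and E: "admits_E 2 x t A"
  shows "cc_set 2 x t A =
      (\<lambda>r. four_block_mat (A 1 1 r) (0\<^sub>m (x 1) (x 2)) (0\<^sub>m (x 2) (x 1)) (0\<^sub>m (x 2) (x 2))) ` {0..t 1 1}
    \<union> (\<lambda>r. four_block_mat (0\<^sub>m (x 1) (x 1)) (0\<^sub>m (x 1) (x 2)) (0\<^sub>m (x 2) (x 1)) (A 2 2 r)) ` {0..t 2 2}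
    \<union> (\<lambda>r. four_block_mat (0\<^sub>m (x 1) (x 1)) (A 1 2 r) (0\<^sub>m (x 2) (x 1)) (0\<^sub>m (x 2) (x 2))) ` {1..t 1 2}
    \<union> (\<lambda>r. four_block_mat (0\<^sub>m (x 1) (x 1)) (0\<^sub>m (x 1) (x 2)) (transpose_mat (A 1 2 r)) (0\<^sub>m (x 2) (x 2))) ` {1..t 1 2}"
proof -
  have fibres: "(1::nat) \<in> {1..2}" "(2::nat) \<in> {1..2}" by simp_all
  have A11: "A 1 1 r \<in> carrier_mat (x 1) (x 1)" if "r \<in> {0..t 1 1}" for r
    using coherent_config_block(1)[OF cc fibres(1,1)] that by simp
  have A22: "A 2 2 r \<in> carrier_mat (x 2) (x 2)" if "r \<in> {0..t 2 2}" for r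
    using coherent_config_block(1)[OF cc fibres(2,2)] that by simp
  have A12: "A 1 2 r \<in> carrier_mat (x 1) (x 2)" if "r \<in> {1..t 1 2}" for r
    using coherent_config_block(1)[OF cc fibres(1,2)] that by simp
  have "A 2 1 ` {1..t 2 1} = transpose_mat ` A 1 2 ` {1..t 1 2}"
    using transpose_block_eq[OF cc E fibres(1,2)] by simp
  then have "(\<lambda>r. hat_mat 2 x 2 1 (A 2 1 r)) ` {1..t 2 1} = hat_mat 2 x 2 1 ` transpose_mat ` A 1 2 ` {1..t 1 2}"
    by (simp only: image_image[symmetric])
  also have "\<dots> = (\<lambda>r. hat_mat 2 x 2 1 (transpose_mat (A 1 2 r))) ` {1..t 1 2}"
    by (simp only: image_image)
  finally have A21: "(\<lambda>r. hat_mat 2 x 2 1 (A 2 1 r)) ` {1..t 2 1}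
      = (\<lambda>r. hat_mat 2 x 2 1 (transpose_mat (A 1 2 r))) ` {1..t 1 2}" .
  show ?thesis
    unfolding cc_set_two_fibres A21
    by (intro arg_cong2[where f = "(\<union>)"] image_cong refl hat_mat_two_fibres,
        simp_all only: transpose_carrier_mat A11 A22 A12)
qed

lemma cc_set_eq_bip_set:
  assumes cc: "coherent_config 2 x t A" and E: "admits_E 2 x t A"
    and t: "t 1 1 = tt" "t 1 2 = tt" "t 2 2 = tt"
  shows "cc_set 2 x t A = bip_set (x 1) (x 2) tt tt tt (A 1 1) (A 2 2) (A 1 2)"
  unfolding cc_set_two_fibres_four_block[OF cc E] bip_set_def t Setcompr_eq_image
  by (simp add: atLeast0AtMost atMost_def image_Collect)

lemma two_fibres_products_transpose:
  assumes cc: "coherent_config 2 x t A" and E: "admits_E 2 x t A"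
    and t: "t 1 1 = tt" "t 1 2 = tt" "t 2 1 = tt" "t 2 2 = tt"
  shows "(\<forall>h\<in>{1..tt}. \<forall>h'\<in>{1..tt}. A 1 2 h * transpose_mat (A 1 2 h') = A 1 2 h' * transpose_mat (A 1 2 h)) \<and>
    mat_span (x 1) (x 1) ({A 1 2 h * transpose_mat (A 1 2 h') | h h'. h \<in> {1..tt} \<and> h' \<in> {1..tt}} \<union> {1\<^sub>m (x 1)})
      = mat_span (x 1) (x 1) (A 1 1 ` {0..tt})"
    and "(\<forall>h\<in>{1..tt}. \<forall>h'\<in>{1..tt}. transpose_mat (A 1 2 h) * A 1 2 h' = transpose_mat (A 1 2 h') * A 1 2 h) \<and>
    mat_span (x 2) (x 2) ({transpose_mat (A 1 2 h) * A 1 2 h' | h h'. h \<in> {1..tt} \<and> h' \<in> {1..tt}} \<union> {1\<^sub>m (x 2)})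
      = mat_span (x 2) (x 2) (A 2 2 ` {0..tt})"
proof -
  have fibres: "(1::nat) \<in> {1..2}" "(2::nat) \<in> {1..2}" "(1::nat) \<noteq> 2" "(2::nat) \<noteq> 1" by simp_all
  have A12: "\<forall>h\<in>{1..tt}. A 1 2 h \<in> carrier_mat (x 1) (x 2)"
    using coherent_config_block(1)[OF cc fibres(1,2)] t by simp
  then have A12_transpose: "\<forall>h\<in>{1..tt}. transpose_mat (A 1 2 h) \<in> carrier_mat (x 2) (x 1)" by simp
  have A21: "mat_span (x 2) (x 1) ((\<lambda>h. transpose_mat (A 1 2 h)) ` {1..tt}) = mat_span (x 2) (x 1) (A 2 1 ` {1..tt})"
    using transpose_block_eq[OF cc E fibres(1,2)] t by (simp add: image_image)
  show "(\<forall>h\<in>{1..tt}. \<forall>h'\<in>{1..tt}. A 1 2 h * transpose_mat (A 1 2 h') = A 1 2 h' * transpose_mat (A 1 2 h)) \<and>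
    mat_span (x 1) (x 1) ({A 1 2 h * transpose_mat (A 1 2 h') | h h'. h \<in> {1..tt} \<and> h' \<in> {1..tt}} \<union> {1\<^sub>m (x 1)})
      = mat_span (x 1) (x 1) (A 1 1 ` {0..tt})"
    by (rule admits_E_products_transpose[OF cc E fibres(1,2,3) t(2,3,1) A12 refl])
  show "(\<forall>h\<in>{1..tt}. \<forall>h'\<in>{1..tt}. transpose_mat (A 1 2 h) * A 1 2 h' = transpose_mat (A 1 2 h') * A 1 2 h) \<and>
    mat_span (x 2) (x 2) ({transpose_mat (A 1 2 h) * A 1 2 h' | h h'. h \<in> {1..tt} \<and> h' \<in> {1..tt}} \<union> {1\<^sub>m (x 2)})
      = mat_span (x 2) (x 2) (A 2 2 ` {0..tt})"
    using admits_E_products_transpose[OF cc E fibres(2,1,4) t(3,2,4) A12_transpose A21] by simp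
qed

lemma bipartite_cc_two_fibres:
  assumes cc: "coherent_config 2 x t A" and E: "admits_E 2 x t A" and "0 < tt"
    and t: "t 1 1 = tt" "t 1 2 = tt" "t 2 1 = tt" "t 2 2 = tt"
  shows "bipartite_cc (x 1) (x 2) tt tt tt (A 1 1) (A 2 2) (A 1 2)"
proof -
  have fibres: "(1::nat) \<in> {1..2}" "(2::nat) \<in> {1..2}" by simp_all
  have size: "fib_off x (Suc 2) = x 1 + x 2" using fib_off_two_fibres(4)[of x] by simp
  have "\<forall>a<x 1 + x 2. \<forall>b<x 1 + x 2. (\<Sum>M\<in>cc_set 2 x t A. M $$ (a,b)) = 1"
    using cc_set_entry_sum[OF cc E] unfolding size by blast
  moreover have "\<forall>M1\<in>cc_set 2 x t A. \<forall>M2\<in>cc_set 2 x t A.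
      M1 * M2 \<in> mat_span (x 1 + x 2) (x 1 + x 2) (cc_set 2 x t A)"
    using cc_set_mult_closed[OF cc] unfolding size by blast
  ultimately show ?thesis
    unfolding bipartite_cc_def Let_def cc_set_eq_bip_set[OF cc E t(1,2,4), symmetric]
    using \<open>0 < tt\<close> t two_fibres_products_transpose[OF cc E t]
      coherent_config_block[OF cc fibres(1,1)] coherent_config_block[OF cc fibres(2,2)]
      coherent_config_block[OF cc fibres(1,2)] coherent_config_identity[OF cc fibres(1)]
      coherent_config_identity[OF cc fibres(2)] coherent_config_transpose_closed[OF cc]
    by simp
qed

theorem lemma10p1:
  fixes x :: "nat \<Rightarrow> nat" and t :: "nat \<Rightarrow> nat \<Rightarrow> nat"
    and A :: "nat \<Rightarrow> nat \<Rightarrow> nat \<Rightarrow> real mat" and tt :: nat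
  assumes "coherent_config 2 x t A"
    and "fibre_symmetric 2 t A"
    and "admits_E 2 x t A"
    and "tt > 0"
    and "has_type2 t (tt + 1) tt (tt + 1)"
  shows "bipartite_cc (x 1) (x 2) tt tt tt (A 1 1) (A 2 2) (A 1 2)
         \<and> cc_set 2 x t A = bip_set (x 1) (x 2) tt tt tt (A 1 1) (A 2 2) (A 1 2)"
proof -
  have t: "t 1 1 = tt" "t 1 2 = tt" "t 2 1 = tt" "t 2 2 = tt"
    using assms(5) unfolding has_type2_def by auto
  show ?thesis
    using bipartite_cc_two_fibres[OF assms(1,3,4) t] cc_set_eq_bip_set[OF assms(1,3) t(1,2,4)] by blast
qed

end
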